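(* Let $\alpha>0$ and $k\ge 2$ be an integer. Then $$\sum_{\sigma\in\mathfrak S_k}\det\Big[\Gamma(j+\sigma(i)\alpha)\prod_{r=1}^{i-1}(r+\sigma(i)\alpha)\Big]_{1\le i,j\le k}=\alpha^{k(k-1)}\prod_{j=1}^k ((j-1)!)^2\,\Gamma(1+\alpha j)>0.$$
   Context: $\mathfrak S_k$ is the symmetric group on $\{1,\dots,k\}$; in the matrix, $i$ is the row index and $j$ the column index, and empty products equal $1$. *)

theory Defs
  imports "HOL-Analysis.Analysis" "Jordan_Normal_Form.Determinant"
begin

definition gamma_perm_mat :: "nat \<Rightarrow> real \<Rightarrow> (nat \<Rightarrow> nat) \<Rightarrow> real mat" where
  "gamma_perm_mat k \<alpha> \<sigma> = mat k k (\<lambda>(i0, j0).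
     let i = i0 + 1; j = j0 + 1 in
     Gamma (real j + real (\<sigma> i) * \<alpha>) *
     (\<Prod>r = 1..i - 1. (real r + real (\<sigma> i) * \<alpha>)))"

end

theory Submission
  imports Defs
begin

text \<open>
  Put z_m = m\<alpha> and write (x)_n for the rising factorial. Since
  \<Gamma>(j + z) = \<Gamma>(1 + z) (1 + z)_{j-1} and \<Prod>_{r<i} (r + z) = (1 + z)_{i-1}, row i of the
  matrix for \<sigma> is \<Gamma>(1 + z_{\<sigma> i}) (1 + z_{\<sigma> i})_{i-1} times row \<sigma>(i) of the fixed matrix
  P = [(1 + z_m)_{j-1}]_{m,j}. Hence its determinant is
  sgn \<sigma> \<cdot> det P \<cdot> \<Prod>_m \<Gamma>(1 + z_m) \<cdot> \<Prod>_i (1 + z_{\<sigma> i})_{i-1}, and the signed sum of the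
  last factor over \<sigma> is det (P transposed) = det P by the Leibniz formula. In the basis
  t \<mapsto> \<Prod>_{l<j} (t + 1 + l) the matrix P is a Vandermonde matrix, so
  det P = \<Prod>_{i<j} (z_j - z_i) = \<Prod>_j \<alpha>^{j-1} (j - 1)!.
\<close>

lemma Gamma_add_of_nat:
  fixes z :: real
  assumes "z \<notin> \<int>\<^sub>\<le>\<^sub>0"
  shows "Gamma (z + of_nat n) = Gamma z * pochhammer z n"
  using pochhammer_Gamma[OF assms, of n] Gamma_nonzero[OF assms] by simp

lemma prod_atLeastAtMost_add_eq_pochhammer:
  fixes y :: "'a :: comm_semiring_1"
  shows "(\<Prod>r = 1..n. of_nat r + y) = pochhammer (1 + y) n"
  by (induction n) (simp_all add: pochhammer_Suc add_ac)

lemma prod_lessThan_of_nat_diff: "(\<Prod>i<j. of_nat j - of_nat i :: 'a :: {comm_ring_1, semiring_char_0}) = fact j"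
proof (induction j)
  case (Suc j)
  have "(\<Prod>i<Suc j. of_nat (Suc j) - of_nat i :: 'a) = of_nat (Suc j) * (\<Prod>i<j. of_nat j - of_nat i)"
    by (simp add: prod.lessThan_Suc_shift del: prod.lessThan_Suc)
  with Suc show ?case by simp
qed simp

lemma det_mat_scale_rows:
  fixes f :: "nat \<times> nat \<Rightarrow> 'a :: comm_ring_1"
  shows "det (mat n n (\<lambda>(i, j). c i * f (i, j))) = (\<Prod>i<n. c i) * det (mat n n f)"
proof -
  have "mat n n (\<lambda>(i, j). c i * f (i, j)) = mat\<^sub>r n n (\<lambda>i. c i \<cdot>\<^sub>v vec n (\<lambda>j. f (i, j)))"
       "mat n n f = mat\<^sub>r n n (\<lambda>i. vec n (\<lambda>j. f (i, j)))"
    by (auto intro!: eq_matI)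
  then show ?thesis
    using det_rows_mul[of "\<lambda>i. vec n (\<lambda>j. f (i, j))" n c] by (simp add: atLeast0LessThan)
qed

lemma det_mat_subtract_prev_col:
  fixes f :: "nat \<times> nat \<Rightarrow> 'a :: comm_ring_1"
  shows "det (mat n n (\<lambda>(i, j). if j = 0 then f (i, j) else f (i, j) - d (j - 1) * f (i, j - 1)))
       = det (mat n n f)" (is "det ?B = _")
proof -
  define U where "U = mat n n (\<lambda>(i, j). if i = j then 1 else if j = Suc i then - d i else (0::'a))"
  have "upper_triangular U" by (auto simp: U_def)
  then have "det U = prod_list (diag_mat U)" by (rule det_upper_triangular[where n = n]) (simp add: U_def)
  also have "\<dots> = 1" unfolding prod_list_diag_prod by (simp add: U_def)
  finally have "det U = 1" .
  moreover have "mat n n f * U = ?B"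
  proof (rule eq_matI)
    fix i j assume "i < dim_row ?B" and "j < dim_col ?B"
    then have i: "i < n" and j: "j < n" by auto
    have "(mat n n f * U) $$ (i, j) = (\<Sum>l<n. f (i, l) * U $$ (l, j))"
      using i j by (simp add: U_def scalar_prod_def lessThan_atLeast0)
    also have "\<dots> = (\<Sum>l<n. (if l = j then f (i, j) else 0) + (if Suc l = j then - d l * f (i, l) else 0))"
      using j by (intro sum.cong) (auto simp: U_def)
    also have "\<dots> = ?B $$ (i, j)"
      using i j by (cases j) (auto simp: sum.distrib)
    finally show "(mat n n f * U) $$ (i, j) = ?B $$ (i, j)" .
  qed (auto simp: U_def)
  ultimately show ?thesis
    using det_mult[of "mat n n f" n U] by (simp add: U_def)
qed

lemma det_mat_first_row_unit:
  fixes f :: "nat \<times> nat \<Rightarrow> 'a :: comm_ring_1"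
  assumes "f (0, 0) = 1" and "\<And>j. f (0, Suc j) = 0"
  shows "det (mat (Suc n) (Suc n) f) = det (mat n n (\<lambda>(i, j). f (Suc i, Suc j)))"
proof -
  have "det (mat (Suc n) (Suc n) f) = (\<Sum>j<Suc n. f (0, j) * cofactor (mat (Suc n) (Suc n) f) 0 j)"
    by (subst laplace_expansion_row[of _ "Suc n" 0]) auto
  also have "\<dots> = cofactor (mat (Suc n) (Suc n) f) 0 0"
    by (subst sum.lessThan_Suc_shift) (simp add: assms)
  also have "\<dots> = det (mat n n (\<lambda>(i, j). f (Suc i, Suc j)))"
    unfolding cofactor_def
    by (simp, rule arg_cong[where f = det], rule eq_matI) (auto simp: mat_delete_def)
  finally show ?thesis .
qed

lemma det_newton_vandermonde:
  fixes x c :: "nat \<Rightarrow> 'a :: comm_ring_1"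
  shows "det (mat n n (\<lambda>(i, j). \<Prod>l<j. x i + c l)) = (\<Prod>j<n. \<Prod>i<j. x j - x i)"
proof (induction n arbitrary: x)
  case (Suc n)
  let ?f = "\<lambda>(i, j). \<Prod>l<j. x i + c l"
  have "det (mat (Suc n) (Suc n) ?f) = det (mat (Suc n) (Suc n)
      (\<lambda>(i, j). if j = 0 then ?f (i, j) else ?f (i, j) - (x 0 + c (j - 1)) * ?f (i, j - 1)))"
    by (rule det_mat_subtract_prev_col[symmetric])
  also have "\<dots> = det (mat (Suc n) (Suc n)
      (\<lambda>(i, j). if j = 0 then 1 else (x i - x 0) * (\<Prod>l<j - 1. x i + c l)))"
    by (rule arg_cong[where f = det], rule eq_matI) (auto simp: algebra_simps gr0_conv_Suc)
  also have "\<dots> = det (mat n n (\<lambda>(i, j). (x (Suc i) - x 0) * (\<Prod>l<j. x (Suc i) + c l)))"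
    by (subst det_mat_first_row_unit) simp_all
  also have "\<dots> = (\<Prod>i<n. x (Suc i) - x 0) * det (mat n n (\<lambda>(i, j). \<Prod>l<j. x (Suc i) + c l))"
    by (rule det_mat_scale_rows[where f = "\<lambda>(i, j). \<Prod>l<j. x (Suc i) + c l", simplified])
  also have "\<dots> = (\<Prod>i<n. x (Suc i) - x 0) * (\<Prod>j<n. \<Prod>i<j. x (Suc j) - x (Suc i))"
    using Suc.IH[of "\<lambda>i. x (Suc i)"] by simp
  also have "\<dots> = (\<Prod>j<Suc n. \<Prod>i<j. x j - x i)"
    by (simp add: prod.lessThan_Suc_shift prod.distrib del: prod.lessThan_Suc)
  finally show ?case .
qed simp

lemma det_eq_sum_signof_prod_col:
  assumes "A \<in> carrier_mat n n"
  shows "det A = (\<Sum>p\<in>{p. p permutes {0..<n}}. signof p * (\<Prod>i<n. A $$ (p i, i)))"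
proof -
  have "det A = det (transpose_mat A)" using det_transpose[OF assms] by simp
  also have "\<dots> = (\<Sum>p\<in>{p. p permutes {0..<n}}. signof p * (\<Prod>i<n. A $$ (p i, i)))"
    unfolding det_def'[OF transpose_carrier_mat[THEN iffD2, OF assms]]
  proof (rule sum.cong)
    fix p assume "p \<in> {p. p permutes {0..<n}}"
    then have "\<And>i. i < n \<Longrightarrow> p i < n" using permutes_in_image by fastforce
    with assms show "signof p * (\<Prod>i = 0..<n. transpose_mat A $$ (i, p i)) = signof p * (\<Prod>i<n. A $$ (p i, i))"
      by (auto simp: atLeast0LessThan intro!: prod.cong)
  qed simp
  finally show ?thesis .
qed

definition shift_perm :: "(nat \<Rightarrow> nat) \<Rightarrow> nat \<Rightarrow> nat" where
  "shift_perm \<tau> x = (if x = 0 then 0 else Suc (\<tau> (x - 1)))"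

lemma shift_perm_Suc [simp]: "shift_perm \<tau> (Suc i) = Suc (\<tau> i)"
  by (simp add: shift_perm_def)

lemma bij_betw_shift_perm: "bij_betw shift_perm {\<tau>. \<tau> permutes {0..<k}} {\<sigma>. \<sigma> permutes {1..k}}"
proof -
  have "bij_betw Suc {0..<k} {1..k}"
    by (simp add: bij_betw_def atLeastLessThanSuc_atLeastAtMost)
  from bij_betw_permutations[OF this]
  show ?thesis
  proof (rule bij_betw_cong[THEN iffD1, rotated])
    fix \<tau> assume \<tau>: "\<tau> \<in> {\<tau>. \<tau> permutes {0..<k}}"
    show "(\<lambda>x. if x \<in> {1..k} then Suc (\<tau> (inv_into {0..<k} Suc x)) else x) = shift_perm \<tau>"
    proof
      fix x
      show "(if x \<in> {1..k} then Suc (\<tau> (inv_into {0..<k} Suc x)) else x) = shift_perm \<tau> x"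
      proof (cases "x \<in> {1..k}")
        case True
        then obtain i where "x = Suc i" "i < k" by (cases x) auto
        then show ?thesis by (simp add: inv_into_f_f)
      next
        case False
        then have "x = 0 \<or> x - 1 \<notin> {0..<k}" by auto
        with \<tau> show ?thesis by (auto simp: shift_perm_def permutes_not_in)
      qed
    qed
  qed
qed

definition pochhammer_mat :: "nat \<Rightarrow> real \<Rightarrow> real mat" where
  "pochhammer_mat k \<alpha> = mat k k (\<lambda>(m, j). pochhammer (1 + real (Suc m) * \<alpha>) j)"

lemma det_pochhammer_mat: "det (pochhammer_mat k \<alpha>) = (\<Prod>j<k. \<alpha> ^ j * fact j)"
proof -
  have "pochhammer_mat k \<alpha> = mat k k (\<lambda>(m, j). \<Prod>l<j. real (Suc m) * \<alpha> + (1 + real l))"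
    by (auto simp: pochhammer_mat_def pochhammer_prod atLeast0LessThan add_ac intro!: eq_matI)
  then have "det (pochhammer_mat k \<alpha>) = (\<Prod>j<k. \<Prod>i<j. real (Suc j) * \<alpha> - real (Suc i) * \<alpha>)"
    by (simp add: det_newton_vandermonde)
  also have "\<dots> = (\<Prod>j<k. \<Prod>i<j. \<alpha> * (real j - real i))"
    by (intro prod.cong) (simp_all add: algebra_simps)
  also have "\<dots> = (\<Prod>j<k. \<alpha> ^ j * (\<Prod>i<j. real j - real i))"
    by (simp add: prod.distrib)
  finally show ?thesis by (simp add: prod_lessThan_of_nat_diff)
qed

lemma gamma_perm_mat_shift_perm:
  assumes "\<alpha> \<ge> 0" and "\<tau> permutes {0..<k}"
  shows "gamma_perm_mat k \<alpha> (shift_perm \<tau>) = mat k k (\<lambda>(i, j).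
           (Gamma (1 + real (Suc (\<tau> i)) * \<alpha>) * pochhammer (1 + real (Suc (\<tau> i)) * \<alpha>) i)
           * pochhammer_mat k \<alpha> $$ (\<tau> i, j))" (is "_ = ?M")
proof (rule eq_matI)
  fix i j assume "i < dim_row ?M" and "j < dim_col ?M"
  then have i: "i < k" and j: "j < k" by auto
  then have "\<tau> i < k" using assms(2) permutes_in_image by fastforce
  define y where "y = real (Suc (\<tau> i)) * \<alpha>"
  have "y \<ge> 0" using assms(1) by (simp add: y_def)
  then have "1 + y \<notin> \<int>\<^sub>\<le>\<^sub>0" by (auto dest!: nonpos_Ints_nonpos)
  then have "Gamma (real (Suc j) + y) = Gamma (1 + y) * pochhammer (1 + y) j"
    using Gamma_add_of_nat[of "1 + y" j] by (simp add: add_ac)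
  moreover have "(\<Prod>r = 1..i. real r + y) = pochhammer (1 + y) i"
    by (rule prod_atLeastAtMost_add_eq_pochhammer)
  ultimately show "gamma_perm_mat k \<alpha> (shift_perm \<tau>) $$ (i, j) = ?M $$ (i, j)"
    using i j \<open>\<tau> i < k\<close> by (simp add: gamma_perm_mat_def pochhammer_mat_def y_def)
qed (auto simp: gamma_perm_mat_def)

lemma det_gamma_perm_mat_shift_perm:
  assumes "\<alpha> \<ge> 0" and \<tau>: "\<tau> permutes {0..<k}"
  shows "det (gamma_perm_mat k \<alpha> (shift_perm \<tau>))
       = (\<Prod>m<k. Gamma (1 + real (Suc m) * \<alpha>)) * det (pochhammer_mat k \<alpha>)
         * (signof \<tau> * (\<Prod>i<k. pochhammer_mat k \<alpha> $$ (\<tau> i, i)))"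
proof -
  let ?P = "pochhammer_mat k \<alpha>"
  have \<tau>_lt: "\<And>i. i < k \<Longrightarrow> \<tau> i < k" using \<tau> permutes_in_image by fastforce
  have "det (gamma_perm_mat k \<alpha> (shift_perm \<tau>))
      = (\<Prod>i<k. Gamma (1 + real (Suc (\<tau> i)) * \<alpha>) * pochhammer (1 + real (Suc (\<tau> i)) * \<alpha>) i)
        * det (mat k k (\<lambda>(i, j). ?P $$ (\<tau> i, j)))"
    unfolding gamma_perm_mat_shift_perm[OF assms]
    by (rule det_mat_scale_rows[where f = "\<lambda>(i, j). ?P $$ (\<tau> i, j)", simplified])
  also have "det (mat k k (\<lambda>(i, j). ?P $$ (\<tau> i, j))) = signof \<tau> * det ?P"
    by (rule det_permute_rows[OF _ \<tau>]) (simp add: pochhammer_mat_def)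
  also have "(\<Prod>i<k. Gamma (1 + real (Suc (\<tau> i)) * \<alpha>) * pochhammer (1 + real (Suc (\<tau> i)) * \<alpha>) i)
      = (\<Prod>i<k. Gamma (1 + real (Suc (\<tau> i)) * \<alpha>)) * (\<Prod>i<k. ?P $$ (\<tau> i, i))"
    using \<tau>_lt by (simp add: prod.distrib pochhammer_mat_def)
  also have "(\<Prod>i<k. Gamma (1 + real (Suc (\<tau> i)) * \<alpha>)) = (\<Prod>m<k. Gamma (1 + real (Suc m) * \<alpha>))"
    using prod.permute[of \<tau> "{..<k}" "\<lambda>m. Gamma (1 + real (Suc m) * \<alpha>)"] \<tau>
    by (simp add: atLeast0LessThan comp_def)
  finally show ?thesis by (simp add: ac_simps)
qed

lemma prod_lessThan_power_square: "(\<Prod>j<k. (a ^ j)\<^sup>2) = (a :: 'a :: comm_monoid_mult) ^ (k * (k - 1))"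
proof (induction k)
  case (Suc k)
  have "(\<Prod>j<Suc k. (a ^ j)\<^sup>2) = a ^ (k * (k - 1)) * (a ^ k)\<^sup>2"
    using Suc by simp
  also have "\<dots> = a ^ (k * (k - 1) + 2 * k)"
    by (simp add: power_add power_mult mult.commute)
  also have "k * (k - 1) + 2 * k = Suc k * (Suc k - 1)"
    by (cases k) simp_all
  finally show ?case .
qed simp

theorem mainTheorem5:
  fixes \<alpha> :: real and k :: nat
  assumes "\<alpha> > 0" and "k \<ge> 2"
  shows "(\<Sum>\<sigma> \<in> {\<sigma>. \<sigma> permutes {1..k}}. det (gamma_perm_mat k \<alpha> \<sigma>))
           = \<alpha> ^ (k * (k - 1)) * (\<Prod>j = 1..k. (fact (j - 1))\<^sup>2 * Gamma (1 + \<alpha> * real j))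
       \<and> \<alpha> ^ (k * (k - 1)) * (\<Prod>j = 1..k. (fact (j - 1))\<^sup>2 * Gamma (1 + \<alpha> * real j)) > 0"
proof
  let ?P = "pochhammer_mat k \<alpha>" and ?G = "\<Prod>m<k. Gamma (1 + real (Suc m) * \<alpha>)"
  have "(\<Sum>\<sigma> \<in> {\<sigma>. \<sigma> permutes {1..k}}. det (gamma_perm_mat k \<alpha> \<sigma>))
      = (\<Sum>\<tau> \<in> {\<tau>. \<tau> permutes {0..<k}}. det (gamma_perm_mat k \<alpha> (shift_perm \<tau>)))"
    by (rule sum.reindex_bij_betw[OF bij_betw_shift_perm, symmetric])
  also have "\<dots> = (\<Sum>\<tau> \<in> {\<tau>. \<tau> permutes {0..<k}}.
                   ?G * det ?P * (signof \<tau> * (\<Prod>i<k. ?P $$ (\<tau> i, i))))"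
    using assms(1) by (intro sum.cong) (simp_all add: det_gamma_perm_mat_shift_perm)
  also have "\<dots> = ?G * det ?P * (\<Sum>\<tau> \<in> {\<tau>. \<tau> permutes {0..<k}}. signof \<tau> * (\<Prod>i<k. ?P $$ (\<tau> i, i)))"
    by (simp add: sum_distrib_left)
  also have "\<dots> = ?G * (det ?P)\<^sup>2"
    using det_eq_sum_signof_prod_col[of ?P k] by (simp add: pochhammer_mat_def power2_eq_square)
  also have "\<dots> = \<alpha> ^ (k * (k - 1)) * (\<Prod>j = 1..k. (fact (j - 1))\<^sup>2 * Gamma (1 + \<alpha> * real j))"
    by (simp add: det_pochhammer_mat prod.atLeast1_atMost_eq prod.distrib power_mult_distrib
        prod_lessThan_power_square prod_power_distrib mult_ac)
  finally show "(\<Sum>\<sigma> \<in> {\<sigma>. \<sigma> permutes {1..k}}. det (gamma_perm_mat k \<alpha> \<sigma>))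
      = \<alpha> ^ (k * (k - 1)) * (\<Prod>j = 1..k. (fact (j - 1))\<^sup>2 * Gamma (1 + \<alpha> * real j))" .
  show "\<alpha> ^ (k * (k - 1)) * (\<Prod>j = 1..k. (fact (j - 1))\<^sup>2 * Gamma (1 + \<alpha> * real j)) > 0"
    using assms(1) by (intro mult_pos_pos prod_pos) (auto intro!: Gamma_real_pos add_pos_nonneg)
qed

end
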